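(* Let $A: E\supseteq D(A)\to E$ be a densely defined, closed, real linear operator on a complex Banach lattice $E$. Let $u\in E_+$ and let $\varphi\in E'$ be strictly positive. If there exists a real $\mu_0\in\rho(A)$ with $-u\otimes\varphi\preceq R(\mu_0,A)\preceq u\otimes\varphi$, then $-u\otimes\varphi\preceq R(\mu,A)^n\preceq u\otimes\varphi$ for all real $\mu\in\rho(A)$ and all $n\in\mathbb{N}$.
   Context: A linear operator $A$ is real if $D(A) = (D(A)\cap E_{\mathbb{R}}) + i(D(A)\cap E_{\mathbb{R}})$ and $A$ maps $D(A)\cap E_{\mathbb{R}}$ into $E_{\mathbb{R}}$, where $E_{\mathbb{R}}$ is the real part of $E$. $R(\mu,A)=(\mu-A)^{-1}$. $\varphi$ strictly positive: $\langle\varphi,f\rangle>0$ for all $0\ne f\in E_+$. $u\otimes\varphi$ is $f\mapsto\langle\varphi,f\rangle u$. For bounded real operators, $T\succeq S$ (equivalently $S\preceq T$) means $T-cS$ maps $E_+$ into $E_+$ for some $c>0$. *)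

theory Defs
  imports "HOL-Analysis.Analysis"
begin

definition lat_abs :: "'a::{lattice, uminus} \<Rightarrow> 'a" where
  "lat_abs x = sup x (- x)"

class real_banach_lattice = banach + ordered_real_vector + lattice +
  assumes lattice_norm: "sup x (- x) \<le> sup y (- y) \<Longrightarrow> norm x \<le> norm y"

text \<open>An (unbounded) linear operator is given by a domain D and a map A
  (only its values on D matter).\<close>

definition lin_op :: "'a::real_vector set \<Rightarrow> ('a \<Rightarrow> 'a) \<Rightarrow> bool" where
  "lin_op D A \<longleftrightarrow> subspace D \<and>
     (\<forall>x\<in>D. \<forall>y\<in>D. A (x + y) = A x + A y) \<and>
     (\<forall>x\<in>D. \<forall>c. A (c *\<^sub>R x) = c *\<^sub>R A x)"

definition densely_defined :: "'a::real_normed_vector set \<Rightarrow> bool" where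
  "densely_defined D \<longleftrightarrow> closure D = UNIV"

definition closed_op :: "'a::real_normed_vector set \<Rightarrow> ('a \<Rightarrow> 'a) \<Rightarrow> bool" where
  "closed_op D A \<longleftrightarrow> closed {(x, A x) | x. x \<in> D}"

definition resolvent :: "'a::real_vector set \<Rightarrow> ('a \<Rightarrow> 'a) \<Rightarrow> real \<Rightarrow> 'a \<Rightarrow> 'a" where
  "resolvent D A \<mu> y = (THE x. x \<in> D \<and> \<mu> *\<^sub>R x - A x = y)"

definition in_resolvent_set :: "'a::real_normed_vector set \<Rightarrow> ('a \<Rightarrow> 'a) \<Rightarrow> real \<Rightarrow> bool" where
  "in_resolvent_set D A \<mu> \<longleftrightarrow>
     (\<forall>y. \<exists>!x. x \<in> D \<and> \<mu> *\<^sub>R x - A x = y) \<and> bounded_linear (resolvent D A \<mu>)"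

definition strictly_positive :: "('a::ordered_real_vector \<Rightarrow> real) \<Rightarrow> bool" where
  "strictly_positive \<phi> \<longleftrightarrow> (\<forall>f. 0 \<le> f \<and> f \<noteq> 0 \<longrightarrow> \<phi> f > 0)"

definition rank_one :: "'a::real_vector \<Rightarrow> ('a \<Rightarrow> real) \<Rightarrow> 'a \<Rightarrow> 'a" where
  "rank_one u \<phi> f = \<phi> f *\<^sub>R u"

text \<open>dominates T S  (T \<succeq> S, i.e. S \<preceq> T): T - c S maps E_+ into E_+ for some c > 0.\<close>

definition dominates :: "('a::ordered_real_vector \<Rightarrow> 'a) \<Rightarrow> ('a \<Rightarrow> 'a) \<Rightarrow> bool" where
  "dominates T S \<longleftrightarrow> (\<exists>c>0. \<forall>f. 0 \<le> f \<longrightarrow> 0 \<le> T f - c *\<^sub>R S f)"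

end

theory Submission
  imports Defs "HOL-Library.Lattice_Algebras"
begin

text \<open>Call T rank-one bounded if \<open>\<bar>T f\<bar> \<le> K \<phi>(f) u\<close> for all \<open>f \<ge> 0\<close> and some K; for operators
  this is exactly \<open>-u\<otimes>\<phi> \<preceq> T \<preceq> u\<otimes>\<phi>\<close>. The class is closed under sums and scalar multiples,
  and under \<open>T \<mapsto> S B T\<close> for S in the class and B bounded: splitting \<open>g = g\<^sup>+ - g\<^sup>-\<close> gives
  \<open>\<bar>S g\<bar> \<le> 2 K \<parallel>\<phi>\<parallel> \<parallel>g\<parallel> u\<close> for every g, while the lattice norm gives
  \<open>\<parallel>B T f\<parallel> \<le> \<parallel>B\<parallel> K \<parallel>u\<parallel> \<phi>(f)\<close> for \<open>f \<ge> 0\<close>. By the resolvent identity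
  \<open>R(\<mu>) = R(\<mu>\<^sub>0) + (\<mu>\<^sub>0 - \<mu>) R(\<mu>\<^sub>0)\<^sup>2 + (\<mu>\<^sub>0 - \<mu>)\<^sup>2 R(\<mu>\<^sub>0) R(\<mu>) R(\<mu>\<^sub>0)\<close>, so \<open>R(\<mu>)\<close> and all its
  powers lie in the class.\<close>

subclass (in real_banach_lattice) lattice_ab_group_add ..

lemma lat_abs_le_iff: "lat_abs x \<le> y \<longleftrightarrow> - y \<le> x \<and> x \<le> (y::'a::lattice_ab_group_add)"
  unfolding lat_abs_def by (auto simp: minus_le_iff)

lemma lat_abs_ge_self: "x \<le> lat_abs (x::'a::lattice_ab_group_add)"
  and lat_abs_ge_minus: "- x \<le> lat_abs x"
  unfolding lat_abs_def by simp_all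

lemma minus_lat_abs_le: "- lat_abs x \<le> (x::'a::lattice_ab_group_add)"
  using lat_abs_ge_minus by (simp add: minus_le_iff)

lemma lat_abs_nonneg: "0 \<le> lat_abs (x::'a::lattice_ab_group_add)"
proof -
  have "x + - x \<le> lat_abs x + lat_abs x"
    using lat_abs_ge_self lat_abs_ge_minus by (rule add_mono)
  then show ?thesis by simp
qed

lemma lat_abs_of_nonneg: "0 \<le> x \<Longrightarrow> lat_abs (x::'a::lattice_ab_group_add) = x"
  unfolding lat_abs_def by (simp add: sup_absorb1 order_trans[of "- x" 0 x])

lemma lat_abs_minus: "lat_abs (- x) = lat_abs (x::'a::lattice_ab_group_add)"
  unfolding lat_abs_def by (simp add: sup_commute)

lemma lat_abs_add_le: "lat_abs (x + y) \<le> lat_abs x + lat_abs (y::'a::lattice_ab_group_add)"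
  unfolding lat_abs_le_iff
  using add_mono[OF minus_lat_abs_le minus_lat_abs_le, of x y]
    add_mono[OF lat_abs_ge_self lat_abs_ge_self, of x y]
  by simp

lemma lat_abs_diff_le: "lat_abs (x - y) \<le> lat_abs x + lat_abs (y::'a::lattice_ab_group_add)"
  using lat_abs_add_le[of x "- y"] by (simp add: lat_abs_minus)

lemma pprt_le_lat_abs: "pprt x \<le> lat_abs (x::'a::lattice_ab_group_add)"
  unfolding pprt_def using lat_abs_ge_self lat_abs_nonneg by (rule sup_least)

lemma eq_pprt_diff_pprt_minus: "x = pprt x - pprt (- x::'a::lattice_ab_group_add)"
  using prts[of x] by (simp add: pprt_neg)

lemma lat_abs_scaleR_le:
  fixes x y :: "'a::{lattice_ab_group_add, ordered_real_vector}"
  assumes "lat_abs x \<le> y"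
  shows "lat_abs (c *\<^sub>R x) \<le> \<bar>c\<bar> *\<^sub>R y"
proof -
  have "lat_abs (c *\<^sub>R x) = lat_abs (\<bar>c\<bar> *\<^sub>R x)"
    by (cases "0 \<le> c") (auto simp: lat_abs_minus[of "c *\<^sub>R x", symmetric])
  moreover have "- (\<bar>c\<bar> *\<^sub>R y) \<le> \<bar>c\<bar> *\<^sub>R x \<and> \<bar>c\<bar> *\<^sub>R x \<le> \<bar>c\<bar> *\<^sub>R y"
    using assms unfolding lat_abs_le_iff
    by (metis abs_ge_zero scaleR_left_mono scaleR_minus_right)
  ultimately show ?thesis by (simp add: lat_abs_le_iff)
qed

lemma norm_mono_lat_abs: "lat_abs x \<le> lat_abs y \<Longrightarrow> norm x \<le> norm (y::'a::real_banach_lattice)"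
  unfolding lat_abs_def by (rule lattice_norm)

lemma norm_lat_abs: "norm (lat_abs x) = norm (x::'a::real_banach_lattice)"
  using lat_abs_of_nonneg[OF lat_abs_nonneg, of x]
  by (intro antisym norm_mono_lat_abs) simp_all

lemma norm_le_of_lat_abs_le:
  fixes x y :: "'a::real_banach_lattice"
  assumes "lat_abs x \<le> y"
  shows "norm x \<le> norm y"
proof -
  have "lat_abs y = y" using lat_abs_nonneg assms by (intro lat_abs_of_nonneg) (rule order_trans)
  then show ?thesis using assms by (intro norm_mono_lat_abs) simp
qed

lemma bounded_linear_resolvent:
  "in_resolvent_set D A \<mu> \<Longrightarrow> bounded_linear (resolvent D A \<mu>)"
  unfolding in_resolvent_set_def by blast

lemma resolvent_unique:
  assumes "in_resolvent_set D A \<mu>" and "x \<in> D" and "\<mu> *\<^sub>R x - A x = y"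
  shows "resolvent D A \<mu> y = x"
  unfolding resolvent_def
  by (rule the1_equality) (use assms in \<open>auto simp: in_resolvent_set_def\<close>)

lemma resolvent_solves:
  assumes "in_resolvent_set D A \<mu>"
  shows "resolvent D A \<mu> y \<in> D" and "\<mu> *\<^sub>R resolvent D A \<mu> y - A (resolvent D A \<mu> y) = y"
proof -
  have "\<exists>!x. x \<in> D \<and> \<mu> *\<^sub>R x - A x = y"
    using assms unfolding in_resolvent_set_def by blast
  then have "resolvent D A \<mu> y \<in> D \<and> \<mu> *\<^sub>R resolvent D A \<mu> y - A (resolvent D A \<mu> y) = y"
    unfolding resolvent_def by (rule theI')
  then show "resolvent D A \<mu> y \<in> D" and "\<mu> *\<^sub>R resolvent D A \<mu> y - A (resolvent D A \<mu> y) = y"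
    by auto
qed

lemma resolvent_identity:
  assumes \<mu>\<^sub>0: "in_resolvent_set D A \<mu>\<^sub>0" and \<mu>: "in_resolvent_set D A \<mu>"
  shows "resolvent D A \<mu> y = resolvent D A \<mu>\<^sub>0 y + (\<mu>\<^sub>0 - \<mu>) *\<^sub>R resolvent D A \<mu>\<^sub>0 (resolvent D A \<mu> y)"
proof -
  let ?x = "resolvent D A \<mu> y"
  have "\<mu>\<^sub>0 *\<^sub>R ?x - A ?x = y + (\<mu>\<^sub>0 - \<mu>) *\<^sub>R ?x"
    using resolvent_solves(2)[OF \<mu>, of y] by (simp add: algebra_simps)
  then have "resolvent D A \<mu>\<^sub>0 (y + (\<mu>\<^sub>0 - \<mu>) *\<^sub>R ?x) = ?x"
    by (rule resolvent_unique[OF \<mu>\<^sub>0 resolvent_solves(1)[OF \<mu>]])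
  then show ?thesis
    using bounded_linear_resolvent[OF \<mu>\<^sub>0]
    by (simp add: linear_add linear_scale bounded_linear.linear)
qed

lemma resolvent_expansion:
  assumes \<mu>\<^sub>0: "in_resolvent_set D A \<mu>\<^sub>0" and \<mu>: "in_resolvent_set D A \<mu>"
  defines "R\<^sub>0 \<equiv> resolvent D A \<mu>\<^sub>0" and "R \<equiv> resolvent D A \<mu>"
  shows "R y = R\<^sub>0 y + (\<mu>\<^sub>0 - \<mu>) *\<^sub>R R\<^sub>0 (R\<^sub>0 y) + ((\<mu>\<^sub>0 - \<mu>) * (\<mu>\<^sub>0 - \<mu>)) *\<^sub>R R\<^sub>0 (R (R\<^sub>0 y))"
proof -
  have lin: "linear R\<^sub>0"
    unfolding R\<^sub>0_def using bounded_linear_resolvent[OF \<mu>\<^sub>0] by (rule bounded_linear.linear)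
  have "R\<^sub>0 y = R y + (\<mu> - \<mu>\<^sub>0) *\<^sub>R R (R\<^sub>0 y)"
    unfolding R\<^sub>0_def R_def by (rule resolvent_identity[OF \<mu> \<mu>\<^sub>0])
  then have "R y = R\<^sub>0 y + (\<mu>\<^sub>0 - \<mu>) *\<^sub>R R (R\<^sub>0 y)"
    by (simp add: algebra_simps)
  then have "R\<^sub>0 (R y) = R\<^sub>0 (R\<^sub>0 y) + (\<mu>\<^sub>0 - \<mu>) *\<^sub>R R\<^sub>0 (R (R\<^sub>0 y))"
    by (simp add: linear_add[OF lin] linear_scale[OF lin])
  moreover have "R y = R\<^sub>0 y + (\<mu>\<^sub>0 - \<mu>) *\<^sub>R R\<^sub>0 (R y)"
    unfolding R\<^sub>0_def R_def by (rule resolvent_identity[OF \<mu>\<^sub>0 \<mu>])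
  ultimately show ?thesis by (simp add: scaleR_add_right add.assoc)
qed

lemma strictly_positive_imp_nonneg:
  assumes "linear \<phi>" and "strictly_positive \<phi>" and "0 \<le> f"
  shows "0 \<le> \<phi> f"
  using assms linear_0[OF assms(1)] unfolding strictly_positive_def
  by (cases "f = 0") (auto intro: less_imp_le)

locale positive_rank_one =
  fixes u :: "'a::real_banach_lattice" and \<phi> :: "'a \<Rightarrow> real"
  assumes u_nonneg: "0 \<le> u"
    and bounded_linear_\<phi>: "bounded_linear \<phi>"
    and \<phi>_nonneg: "0 \<le> f \<Longrightarrow> 0 \<le> \<phi> f"
begin

definition rank_one_bounded :: "('a \<Rightarrow> 'a) \<Rightarrow> bool" where
  "rank_one_bounded T \<longleftrightarrow> (\<exists>K\<ge>0. \<forall>f\<ge>0. lat_abs (T f) \<le> (K * \<phi> f) *\<^sub>R u)"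

lemma rank_one_boundedI:
  fixes T :: "'a \<Rightarrow> 'a"
  shows "0 \<le> K \<Longrightarrow> (\<And>f. 0 \<le> f \<Longrightarrow> lat_abs (T f) \<le> (K * \<phi> f) *\<^sub>R u) \<Longrightarrow> rank_one_bounded T"
  unfolding rank_one_bounded_def by blast

lemma rank_one_boundedE:
  fixes T :: "'a \<Rightarrow> 'a"
  assumes "rank_one_bounded T"
  obtains K where "0 \<le> K" and "\<And>f. 0 \<le> f \<Longrightarrow> lat_abs (T f) \<le> (K * \<phi> f) *\<^sub>R u"
  using assms unfolding rank_one_bounded_def
  by (metis (no_types))

lemma scaleR_u_mono: "s \<le> t \<Longrightarrow> s *\<^sub>R u \<le> t *\<^sub>R u"
  by (rule scaleR_right_mono[OF _ u_nonneg])

lemma rank_one_bounded_iff_dominates: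
  "rank_one_bounded T \<longleftrightarrow> dominates T (\<lambda>f. - rank_one u \<phi> f) \<and> dominates (rank_one u \<phi>) T"
proof
  assume "rank_one_bounded T"
  then obtain K where K: "0 \<le> K" "\<And>f. 0 \<le> f \<Longrightarrow> lat_abs (T f) \<le> (K * \<phi> f) *\<^sub>R u"
    by (rule rank_one_boundedE) blast
  have bounds: "- (((K + 1) * \<phi> f) *\<^sub>R u) \<le> T f \<and> T f \<le> ((K + 1) * \<phi> f) *\<^sub>R u" if "0 \<le> f" for f
  proof -
    have "(K * \<phi> f) *\<^sub>R u \<le> ((K + 1) * \<phi> f) *\<^sub>R u"
      using \<phi>_nonneg[OF that] by (intro scaleR_u_mono) (simp add: mult_right_mono)
    then show ?thesis
      using K(2)[OF that] unfolding lat_abs_le_iff by (meson neg_le_iff_le order_trans)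
  qed
  have "dominates T (\<lambda>f. - rank_one u \<phi> f)"
    unfolding dominates_def rank_one_def diff_ge_0_iff_ge
    by (rule exI[of _ "K + 1"]) (use K(1) bounds in auto)
  moreover have "dominates (rank_one u \<phi>) T"
    unfolding dominates_def rank_one_def
  proof (intro exI[of _ "1 / (K + 1)"] conjI allI impI)
    fix f :: 'a assume "0 \<le> f"
    then have "(1 / (K + 1)) *\<^sub>R T f \<le> (1 / (K + 1)) *\<^sub>R (((K + 1) * \<phi> f) *\<^sub>R u)"
      using bounds K(1) by (intro scaleR_left_mono) auto
    then show "0 \<le> \<phi> f *\<^sub>R u - (1 / (K + 1)) *\<^sub>R T f"
      using K(1) by simp
  qed (use K(1) in simp)
  ultimately show "dominates T (\<lambda>f. - rank_one u \<phi> f) \<and> dominates (rank_one u \<phi>) T" ..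
next
  assume "dominates T (\<lambda>f. - rank_one u \<phi> f) \<and> dominates (rank_one u \<phi>) T"
  then obtain c d where "0 < c" "0 < d"
    and lower: "\<And>f. 0 \<le> f \<Longrightarrow> - ((c * \<phi> f) *\<^sub>R u) \<le> T f"
    and upper: "\<And>f. 0 \<le> f \<Longrightarrow> d *\<^sub>R T f \<le> \<phi> f *\<^sub>R u"
    unfolding dominates_def rank_one_def diff_ge_0_iff_ge by auto
  show "rank_one_bounded T"
  proof (rule rank_one_boundedI[of "c + 1 / d"])
    fix f :: 'a assume f: "0 \<le> f"
    have "- ((c * \<phi> f) *\<^sub>R u) \<le> T f"
      by (rule lower[OF f])
    moreover have "T f \<le> (\<phi> f / d) *\<^sub>R u"
      using scaleR_left_mono[OF upper[OF f], of "1 / d"] \<open>0 < d\<close> by simp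
    moreover have "c * \<phi> f \<le> (c + 1 / d) * \<phi> f" and "\<phi> f / d \<le> (c + 1 / d) * \<phi> f"
      using \<phi>_nonneg[OF f] \<open>0 < c\<close> \<open>0 < d\<close> by (simp_all add: algebra_simps)
    ultimately show "lat_abs (T f) \<le> ((c + 1 / d) * \<phi> f) *\<^sub>R u"
      unfolding lat_abs_le_iff by (meson neg_le_iff_le order_trans scaleR_u_mono)
  qed (use \<open>0 < c\<close> \<open>0 < d\<close> in simp)
qed

lemma rank_one_bounded_add:
  assumes "rank_one_bounded T" and "rank_one_bounded S"
  shows "rank_one_bounded (\<lambda>f. T f + S f)"
proof -
  obtain K L where "0 \<le> K" "0 \<le> L"
    and "\<And>f. 0 \<le> f \<Longrightarrow> lat_abs (T f) \<le> (K * \<phi> f) *\<^sub>R u"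
    and "\<And>f. 0 \<le> f \<Longrightarrow> lat_abs (S f) \<le> (L * \<phi> f) *\<^sub>R u"
    using assms by (elim rank_one_boundedE) blast
  then show ?thesis
    by (intro rank_one_boundedI[of "K + L"])
      (auto simp: distrib_right scaleR_add_left intro: order_trans[OF lat_abs_add_le] add_mono)
qed

lemma rank_one_bounded_scaleR:
  assumes "rank_one_bounded T"
  shows "rank_one_bounded (\<lambda>f. c *\<^sub>R T f)"
proof -
  obtain K where "0 \<le> K" and K: "\<And>f. 0 \<le> f \<Longrightarrow> lat_abs (T f) \<le> (K * \<phi> f) *\<^sub>R u"
    using assms by (rule rank_one_boundedE) blast
  show ?thesis
  proof (rule rank_one_boundedI[of "\<bar>c\<bar> * K"])
    fix f :: 'a assume "0 \<le> f"
    then have "lat_abs (c *\<^sub>R T f) \<le> \<bar>c\<bar> *\<^sub>R ((K * \<phi> f) *\<^sub>R u)"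
      by (intro lat_abs_scaleR_le K)
    then show "lat_abs (c *\<^sub>R T f) \<le> (\<bar>c\<bar> * K * \<phi> f) *\<^sub>R u"
      by (simp add: mult.assoc)
  qed (use \<open>0 \<le> K\<close> in simp)
qed

lemma lat_abs_le_onorm_bound:
  assumes "linear T" and "0 \<le> K"
    and bound: "\<And>f. 0 \<le> f \<Longrightarrow> lat_abs (T f) \<le> (K * \<phi> f) *\<^sub>R u"
  shows "lat_abs (T h) \<le> (2 * K * onorm \<phi> * norm h) *\<^sub>R u"
proof -
  have part_bound: "lat_abs (T g) \<le> (K * onorm \<phi> * norm h) *\<^sub>R u"
    if "0 \<le> g" and "g \<le> lat_abs h" for g
  proof -
    have "norm g \<le> norm (lat_abs h)"
      using that by (intro norm_le_of_lat_abs_le) (simp add: lat_abs_of_nonneg)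
    then have "\<phi> g \<le> onorm \<phi> * norm h"
      using onorm[OF bounded_linear_\<phi>, of g] onorm_pos_le[OF bounded_linear_\<phi>]
      by (simp add: norm_lat_abs) (meson abs_ge_self mult_left_mono order_trans)
    then have "(K * \<phi> g) *\<^sub>R u \<le> (K * onorm \<phi> * norm h) *\<^sub>R u"
      using \<open>0 \<le> K\<close> by (intro scaleR_u_mono) (simp add: mult.assoc mult_left_mono)
    then show ?thesis using bound[OF \<open>0 \<le> g\<close>] by (rule order_trans[rotated])
  qed
  have "T h = T (pprt h) - T (pprt (- h))"
    by (subst eq_pprt_diff_pprt_minus) (rule linear_diff[OF \<open>linear T\<close>])
  then have "lat_abs (T h) \<le> lat_abs (T (pprt h)) + lat_abs (T (pprt (- h)))"
    by (simp add: lat_abs_diff_le)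
  also have "\<dots> \<le> (K * onorm \<phi> * norm h) *\<^sub>R u + (K * onorm \<phi> * norm h) *\<^sub>R u"
    using pprt_le_lat_abs[of h] pprt_le_lat_abs[of "- h"]
    by (intro add_mono part_bound) (simp_all add: lat_abs_minus)
  finally show ?thesis by (simp add: scaleR_add_left[symmetric] mult.assoc)
qed

lemma rank_one_bounded_sandwich:
  assumes "linear T" and "rank_one_bounded T" and "bounded_linear B" and "rank_one_bounded S"
  shows "rank_one_bounded (\<lambda>f. T (B (S f)))"
proof -
  obtain K where "0 \<le> K" and K: "\<And>f. 0 \<le> f \<Longrightarrow> lat_abs (T f) \<le> (K * \<phi> f) *\<^sub>R u"
    using assms(2) by (rule rank_one_boundedE) blast
  obtain L where "0 \<le> L" and L: "\<And>f. 0 \<le> f \<Longrightarrow> lat_abs (S f) \<le> (L * \<phi> f) *\<^sub>R u"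
    using assms(4) by (rule rank_one_boundedE) blast
  have "0 \<le> onorm \<phi>" and "0 \<le> onorm B"
    using onorm_pos_le bounded_linear_\<phi> \<open>bounded_linear B\<close> by blast+
  let ?C = "2 * K * onorm \<phi> * (onorm B * (L * norm u))"
  show ?thesis
  proof (rule rank_one_boundedI[of ?C])
    show "0 \<le> ?C"
      using \<open>0 \<le> K\<close> \<open>0 \<le> L\<close> \<open>0 \<le> onorm \<phi>\<close> \<open>0 \<le> onorm B\<close> by simp
    fix f :: 'a assume "0 \<le> f"
    then have "norm (S f) \<le> L * \<phi> f * norm u"
      using norm_le_of_lat_abs_le[OF L] \<open>0 \<le> L\<close> \<phi>_nonneg by simp
    have "norm (B (S f)) \<le> onorm B * norm (S f)"
      using \<open>bounded_linear B\<close> by (rule onorm)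
    also have "\<dots> \<le> onorm B * (L * \<phi> f * norm u)"
      using \<open>norm (S f) \<le> L * \<phi> f * norm u\<close> \<open>0 \<le> onorm B\<close> by (rule mult_left_mono)
    finally have "(2 * K * onorm \<phi> * norm (B (S f))) *\<^sub>R u
        \<le> (2 * K * onorm \<phi> * (onorm B * (L * \<phi> f * norm u))) *\<^sub>R u"
      using \<open>0 \<le> K\<close> \<open>0 \<le> onorm \<phi>\<close> by (intro scaleR_u_mono mult_left_mono) simp_all
    also have "\<dots> = (?C * \<phi> f) *\<^sub>R u"
      by (simp add: ac_simps)
    finally show "lat_abs (T (B (S f))) \<le> (?C * \<phi> f) *\<^sub>R u"
      using lat_abs_le_onorm_bound[OF \<open>linear T\<close> \<open>0 \<le> K\<close> K] by (rule order_trans[rotated])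
  qed
qed

lemma rank_one_bounded_funpow:
  assumes "linear T" and "rank_one_bounded T" and "1 \<le> n"
  shows "rank_one_bounded (T ^^ n)"
  using \<open>1 \<le> n\<close>
proof (induction n rule: dec_induct)
  case base
  show ?case using \<open>rank_one_bounded T\<close> by simp
next
  case (step n)
  have "rank_one_bounded (\<lambda>f. T ((\<lambda>x. x) ((T ^^ n) f)))"
    using assms(1,2) bounded_linear_ident step.IH by (rule rank_one_bounded_sandwich)
  then show ?case by (simp add: o_def)
qed

end

theorem proposition4p1:
  fixes D :: "'a::real_banach_lattice set" and A :: "'a \<Rightarrow> 'a"
    and u :: 'a and \<phi> :: "'a \<Rightarrow> real" and \<mu>\<^sub>0 :: real
  assumes "lin_op D A" and "densely_defined D" and "closed_op D A"
    and "0 \<le> u"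
    and "bounded_linear \<phi>" and "strictly_positive \<phi>"
    and "in_resolvent_set D A \<mu>\<^sub>0"
    and "dominates (resolvent D A \<mu>\<^sub>0) (\<lambda>f. - rank_one u \<phi> f)"
    and "dominates (rank_one u \<phi>) (resolvent D A \<mu>\<^sub>0)"
  shows "\<forall>\<mu> n. in_resolvent_set D A \<mu> \<and> n \<ge> 1 \<longrightarrow>
           dominates (resolvent D A \<mu> ^^ n) (\<lambda>f. - rank_one u \<phi> f) \<and>
           dominates (rank_one u \<phi>) (resolvent D A \<mu> ^^ n)"
proof (intro allI impI, elim conjE)
  fix \<mu> :: real and n :: nat
  assume \<mu>: "in_resolvent_set D A \<mu>" and "1 \<le> n"
  interpret positive_rank_one u \<phi>
    using assms(4,5) strictly_positive_imp_nonneg[OF bounded_linear.linear[OF assms(5)] assms(6)]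
    by (rule positive_rank_one.intro)
  let ?R\<^sub>0 = "resolvent D A \<mu>\<^sub>0" and ?R = "resolvent D A \<mu>" and ?d = "\<mu>\<^sub>0 - \<mu>"
  have lin\<^sub>0: "bounded_linear ?R\<^sub>0" and lin: "bounded_linear ?R"
    using assms(7) \<mu> by (simp_all add: bounded_linear_resolvent)
  have R\<^sub>0: "rank_one_bounded ?R\<^sub>0"
    using assms(8,9) by (simp add: rank_one_bounded_iff_dominates)
  have R\<^sub>0R\<^sub>0: "rank_one_bounded (\<lambda>y. ?R\<^sub>0 (?R\<^sub>0 y))"
    using rank_one_bounded_sandwich[OF bounded_linear.linear[OF lin\<^sub>0] R\<^sub>0 bounded_linear_ident R\<^sub>0] .
  have R\<^sub>0RR\<^sub>0: "rank_one_bounded (\<lambda>y. ?R\<^sub>0 (?R (?R\<^sub>0 y)))"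
    using bounded_linear.linear[OF lin\<^sub>0] R\<^sub>0 lin R\<^sub>0 by (rule rank_one_bounded_sandwich)
  have "rank_one_bounded (\<lambda>y. ?R\<^sub>0 y + ?d *\<^sub>R ?R\<^sub>0 (?R\<^sub>0 y) + (?d * ?d) *\<^sub>R ?R\<^sub>0 (?R (?R\<^sub>0 y)))"
    using R\<^sub>0 R\<^sub>0R\<^sub>0 R\<^sub>0RR\<^sub>0 by (intro rank_one_bounded_add rank_one_bounded_scaleR)
  then have "rank_one_bounded ?R"
    unfolding resolvent_expansion[OF assms(7) \<mu>, symmetric] .
  then have "rank_one_bounded (?R ^^ n)"
    using bounded_linear.linear[OF lin] \<open>1 \<le> n\<close> by (intro rank_one_bounded_funpow)
  then show "dominates (?R ^^ n) (\<lambda>f. - rank_one u \<phi> f) \<and> dominates (rank_one u \<phi>) (?R ^^ n)"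
    by (simp add: rank_one_bounded_iff_dominates)
qed

end
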